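(* In the setting described in the context, suppose that the nearest neighbour recurrence coefficients satisfy \[ \max_{1\le i\le r}\sup_{\ell\ge0}|a_{\vec n_\ell,i}|<\infty \quad\text{and}\quad \max_{1\le i\le r}\sup_{\vec n\in\mathbb{N}_0^r}|b_{\vec n,i}|<\infty. \] Then the matrix $J$ associated with the path $(\vec n_\ell)$ satisfies $\sup_{|i-j|\le R}|J_{i,j}|<\infty$ for every $R\ge0$.
   Context: Let $r\ge1$ and let $\mu_1,\dots,\mu_r$ be positive Borel measures on $\mathbb{R}$ with all moments finite, forming a perfect system: for every $\vec n\in\mathbb{N}_0^r$ there is a monic polynomial $P_{\vec n}$ of degree $|\vec n|=n_1+\dots+n_r$ with $\int x^kP_{\vec n}\,d\mu_j=0$ for $0\le k\le n_j-1$, $1\le j\le r$. These satisfy the nearest neighbour recurrence relations $xP_{\vec n}(x)=P_{\vec n+\vec e_k}(x)+b_{\vec n,k}P_{\vec n}(x)+\sum_{j=1}^ra_{\vec n,j}P_{\vec n-\vec e_j}(x)$, $1\le k\le r$, with real coefficients $a_{\vec n,j},b_{\vec n,k}$ ($\vec e_j$ the $j$-th unit vector). Fix a path $(\vec n_\ell)_{\ell\ge0}$ with $|\vec n_\ell|=\ell$ and $\vec n_{\ell+1}=\vec n_\ell+\vec e_{i_\ell}$, $i_\ell\in\{1,\dots,r\}$, and set $p_\ell=P_{\vec n_\ell}$. The matrix $J=[J_{\ell,k}]_{\ell,k\ge0}$ is defined by $xp_\ell=\sum_{k=0}^{\ell+1}J_{\ell,k}p_k$, with $J_{\ell,k}=0$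 for $k>\ell+1$. *)

theory Defs
  imports "HOL-Analysis.Analysis" "HOL-Computational_Algebra.Polynomial"
begin

text \<open>Multi-indices in N_0^r are represented as functions nat => nat that vanish
outside {1..r}.\<close>

definition mindex :: "nat \<Rightarrow> (nat \<Rightarrow> nat) set" where
  "mindex r = {n. \<forall>i. i \<notin> {1..r} \<longrightarrow> n i = 0}"

definition mlen :: "nat \<Rightarrow> (nat \<Rightarrow> nat) \<Rightarrow> nat" where
  "mlen r n = (\<Sum>i=1..r. n i)"

definition unitv :: "nat \<Rightarrow> nat \<Rightarrow> nat" where
  "unitv j = (\<lambda>i. if i = j then 1 else 0)"

definition is_type2_mop ::
  "(nat \<Rightarrow> real measure) \<Rightarrow> nat \<Rightarrow> (nat \<Rightarrow> nat) \<Rightarrow> real poly \<Rightarrow> bool" where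
  "is_type2_mop \<mu> r n P \<longleftrightarrow>
     lead_coeff P = 1 \<and> degree P = mlen r n \<and>
     (\<forall>j\<in>{1..r}. \<forall>k<n j. (\<integral>x. x ^ k * poly P x \<partial>\<mu> j) = 0)"

definition perfect_system :: "(nat \<Rightarrow> real measure) \<Rightarrow> nat \<Rightarrow> bool" where
  "perfect_system \<mu> r \<longleftrightarrow> (\<forall>n\<in>mindex r. \<exists>!P. is_type2_mop \<mu> r n P)"

definition mop :: "(nat \<Rightarrow> real measure) \<Rightarrow> nat \<Rightarrow> (nat \<Rightarrow> nat) \<Rightarrow> real poly" where
  "mop \<mu> r n = (THE P. is_type2_mop \<mu> r n P)"

end

theory Submission
  imports Defs
begin

text \<open>Subtracting the recurrences of P_q in two directions k and j gives
  P_{q+e_k} = P_{q+e_j} + (b_{q,j} - b_{q,k}) P_q. Iterating this along the path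
  expands P_{n_l - e_j} in p_0, ..., p_{l-1} with coefficients bounded by (2B)^(l-1-k),
  where B bounds the b's. Hence the recurrence in direction i_l, compared with the row of J
  by uniqueness of coefficients in the basis p_k (deg p_k = k), yields J_{l,l+1} = 1,
  J_{l,l} = b_{n_l,i_l} and |J_{l,k}| \<le> r A (2B)^(l-1-k) for k < l, where A bounds the
  a's along the path; on a band |l - k| \<le> R these are uniformly bounded.\<close>

lemma smult_sum_right: "smult c (\<Sum>x\<in>A. f x) = (\<Sum>x\<in>A. smult c (f x))"
  by (induction A rule: infinite_finite_induct) (auto simp: smult_add_right)

lemma graded_basis_coeffs_zero:
  fixes p :: "nat \<Rightarrow> 'a::idom poly"
  assumes deg: "\<And>k. degree (p k) = k" and nz: "\<And>k. p k \<noteq> 0"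
  shows "(\<Sum>k\<le>n. smult (w k) (p k)) = 0 \<Longrightarrow> k \<le> n \<Longrightarrow> w k = 0"
proof (induction n arbitrary: k)
  case 0
  then show ?case using nz by simp
next
  case (Suc n)
  have "coeff (\<Sum>k\<le>n. smult (w k) (p k)) (Suc n) = 0"
    unfolding coeff_sum by (intro sum.neutral) (auto simp: deg coeff_eq_0)
  then have "w (Suc n) * lead_coeff (p (Suc n)) = 0"
    using arg_cong[OF Suc.prems(1), of "\<lambda>q. coeff q (Suc n)"] by (simp add: deg)
  then have top: "w (Suc n) = 0" using nz by simp
  then have "(\<Sum>k\<le>n. smult (w k) (p k)) = 0" using Suc.prems by simp
  then show ?case using Suc top by (cases "k = Suc n") auto
qed

lemma graded_basis_coeffs_unique:
  fixes p :: "nat \<Rightarrow> 'a::idom poly"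
  assumes deg: "\<And>k. degree (p k) = k" and nz: "\<And>k. p k \<noteq> 0"
    and eq: "(\<Sum>k\<le>n. smult (u k) (p k)) = (\<Sum>k\<le>n. smult (v k) (p k))" and "k \<le> n"
  shows "u k = v k"
proof -
  have "(\<Sum>k\<le>n. smult (u k - v k) (p k)) = 0"
    using eq by (simp add: smult_diff_left sum_subtractf)
  from graded_basis_coeffs_zero[OF deg nz this \<open>k \<le> n\<close>] show ?thesis by simp
qed

lemma lower_hessenberg_band_bounded:
  fixes J :: "nat \<Rightarrow> nat \<Rightarrow> real"
  assumes upper: "\<And>l k. Suc l < k \<Longrightarrow> J l k = 0"
    and super: "\<And>l. \<bar>J l (Suc l)\<bar> \<le> C" and diag: "\<And>l. \<bar>J l l\<bar> \<le> C"
    and sub: "\<And>l k. k < l \<Longrightarrow> \<bar>J l k\<bar> \<le> D * E ^ (l - 1 - k)"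
    and "0 \<le> D" "0 \<le> E"
  shows "\<exists>C'. \<forall>i j. \<bar>real i - real j\<bar> \<le> R \<longrightarrow> \<bar>J i j\<bar> \<le> C'"
proof (intro exI allI impI)
  fix i j assume ij: "\<bar>real i - real j\<bar> \<le> R"
  define M where "M = max 1 E"
  have "0 \<le> D * M ^ nat \<lceil>R\<rceil>" using \<open>0 \<le> D\<close> by (simp add: M_def)
  consider "Suc i < j" | "j = Suc i" | "j = i" | "j < i" by linarith
  then show "\<bar>J i j\<bar> \<le> \<bar>C\<bar> + D * M ^ nat \<lceil>R\<rceil>"
  proof cases
    case 1
    then show ?thesis using upper \<open>0 \<le> D * M ^ nat \<lceil>R\<rceil>\<close> by simp
  next
    case 2
    then show ?thesis using super[of i] abs_ge_self[of C] \<open>0 \<le> D * M ^ nat \<lceil>R\<rceil>\<close> by simp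
  next
    case 3
    then show ?thesis using diag[of i] abs_ge_self[of C] \<open>0 \<le> D * M ^ nat \<lceil>R\<rceil>\<close> by simp
  next
    case 4
    have "E ^ (i - 1 - j) \<le> M ^ (i - 1 - j)"
      unfolding M_def by (rule power_mono) (auto simp: \<open>0 \<le> E\<close>)
    also have "\<dots> \<le> M ^ nat \<lceil>R\<rceil>"
    proof (rule power_increasing)
      have "real (i - 1 - j) \<le> R" using ij 4 by (simp add: of_nat_diff)
      also have "\<dots> \<le> real (nat \<lceil>R\<rceil>)" by (rule real_nat_ceiling_ge)
      finally show "i - 1 - j \<le> nat \<lceil>R\<rceil>" by (simp only: of_nat_le_iff)
    qed (simp add: M_def)
    finally have "D * E ^ (i - 1 - j) \<le> D * M ^ nat \<lceil>R\<rceil>"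
      using \<open>0 \<le> D\<close> by (rule mult_left_mono)
    then show ?thesis using sub[OF 4] by simp
  qed
qed

lemma mop_is_type2:
  assumes "perfect_system \<mu> r" and "n \<in> mindex r"
  shows "is_type2_mop \<mu> r n (mop \<mu> r n)"
  using assms unfolding perfect_system_def mop_def by (metis theI')

text \<open>The convention a_{n,j} = 0 for n_j = 0 gives meaning to the recurrence at the
  boundary of the index set, where truncated subtraction makes n - e_j = n.\<close>

locale nearest_neighbour_recurrence =
  fixes r :: nat
    and \<mu> :: "nat \<Rightarrow> real measure"
    and a b :: "(nat \<Rightarrow> nat) \<Rightarrow> nat \<Rightarrow> real"
  assumes perfect: "perfect_system \<mu> r"
    and a_zero: "\<And>n j. n \<in> mindex r \<Longrightarrow> j \<in> {1..r} \<Longrightarrow> n j = 0 \<Longrightarrow> a n j = 0"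
    and nnrr: "\<And>n k. n \<in> mindex r \<Longrightarrow> k \<in> {1..r} \<Longrightarrow>
        [:0, 1:] * mop \<mu> r n
          = mop \<mu> r (\<lambda>i. n i + unitv k i) + smult (b n k) (mop \<mu> r n)
            + (\<Sum>j=1..r. smult (a n j) (mop \<mu> r (\<lambda>i. n i - unitv j i)))"
begin

lemma mop_step_difference:
  assumes "q \<in> mindex r" "j \<in> {1..r}" "k \<in> {1..r}"
  shows "mop \<mu> r (\<lambda>i. q i + unitv k i)
       = mop \<mu> r (\<lambda>i. q i + unitv j i) + smult (b q j - b q k) (mop \<mu> r q)"
proof -
  have "mop \<mu> r (\<lambda>i. q i + unitv k i) + smult (b q k) (mop \<mu> r q)
      = mop \<mu> r (\<lambda>i. q i + unitv j i) + smult (b q j) (mop \<mu> r q)"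
    by (rule add_right_imp_eq[OF trans[OF sym[OF nnrr[OF assms(1,3)]] nnrr[OF assms(1,2)]]])
  then have "mop \<mu> r (\<lambda>i. q i + unitv k i)
      = mop \<mu> r (\<lambda>i. q i + unitv j i) + smult (b q j) (mop \<mu> r q) - smult (b q k) (mop \<mu> r q)"
    by (simp add: eq_diff_eq)
  then show ?thesis by (simp add: smult_diff_left add_diff_eq)
qed

end

locale nearest_neighbour_path = nearest_neighbour_recurrence +
  fixes path :: "nat \<Rightarrow> nat \<Rightarrow> nat"
    and idx :: "nat \<Rightarrow> nat"
  assumes path0: "path 0 = (\<lambda>_. 0)"
    and path_step: "\<And>l. idx l \<in> {1..r} \<and> path (Suc l) = (\<lambda>i. path l i + unitv (idx l) i)"
begin

abbreviation p :: "nat \<Rightarrow> real poly" where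
  "p l \<equiv> mop \<mu> r (path l)"

lemma idx_mem: "idx l \<in> {1..r}"
  and path_Suc: "path (Suc l) = (\<lambda>i. path l i + unitv (idx l) i)"
  using path_step by auto

lemma path_mindex: "path l \<in> mindex r"
  and mlen_path: "mlen r (path l) = l"
proof (induction l)
  case 0
  show "path 0 \<in> mindex r" "mlen r (path 0) = 0" by (simp_all add: path0 mindex_def mlen_def)
next
  case (Suc l)
  show "path (Suc l) \<in> mindex r"
    using Suc.IH(1) idx_mem[of l] by (auto simp: path_Suc mindex_def unitv_def)
  have "mlen r (path (Suc l)) = mlen r (path l) + (\<Sum>i=1..r. unitv (idx l) i)"
    by (simp add: path_Suc mlen_def sum.distrib)
  then show "mlen r (path (Suc l)) = Suc l"
    using Suc.IH(2) idx_mem[of l] by (simp add: unitv_def)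
qed

lemma degree_p: "degree (p l) = l"
  and p_nonzero: "p l \<noteq> 0"
  using mop_is_type2[OF perfect path_mindex, of l] mlen_path[of l]
  by (auto simp: is_type2_mop_def)

lemma mop_path_minus_unitv_expansion:
  fixes B :: real
  assumes B: "\<And>i n. i \<in> {1..r} \<Longrightarrow> n \<in> mindex r \<Longrightarrow> \<bar>b n i\<bar> \<le> B"
  shows "j \<in> {1..r} \<Longrightarrow> 1 \<le> path l j \<Longrightarrow>
    \<exists>c. mop \<mu> r (\<lambda>i. path l i - unitv j i) = (\<Sum>k<l. smult (c k) (p k))
        \<and> (\<forall>k<l. \<bar>c k\<bar> \<le> (2 * B) ^ (l - 1 - k))"
proof (induction l arbitrary: j)
  case 0
  then show ?case by (simp add: path0)
next
  case (Suc l)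
  show ?case
  proof (cases "j = idx l")
    case True
    have "0 \<le> B" using B[OF Suc.prems(1) path_mindex[of l]] by linarith
    have "(\<lambda>i. path (Suc l) i - unitv j i) = path l" using True by (simp add: path_Suc)
    then show ?thesis using \<open>0 \<le> B\<close> by (intro exI[of _ "\<lambda>k. if k = l then 1 else 0"]) auto
  next
    case False
    define q where "q = (\<lambda>i. path l i - unitv j i)"
    have "1 \<le> path l j" using Suc.prems False by (simp add: path_Suc unitv_def)
    then obtain c where c: "mop \<mu> r q = (\<Sum>k<l. smult (c k) (p k))"
      and c_bound: "\<And>k. k < l \<Longrightarrow> \<bar>c k\<bar> \<le> (2 * B) ^ (l - 1 - k)"
      using Suc.IH Suc.prems(1) unfolding q_def by blast
    have q: "q \<in> mindex r" using path_mindex[of l] by (auto simp: q_def mindex_def)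
    have up_idx: "(\<lambda>i. q i + unitv (idx l) i) = (\<lambda>i. path (Suc l) i - unitv j i)"
      using \<open>1 \<le> path l j\<close> False by (auto simp: q_def path_Suc unitv_def)
    have up_j: "(\<lambda>i. q i + unitv j i) = path l"
      using \<open>1 \<le> path l j\<close> by (auto simp: q_def unitv_def)
    define \<beta> where "\<beta> = b q j - b q (idx l)"
    have \<beta>_bound: "\<bar>\<beta>\<bar> \<le> 2 * B"
      using B[OF Suc.prems(1) q] B[OF idx_mem[of l] q] by (simp add: \<beta>_def)
    define c' where "c' k = (if k = l then 1 else \<beta> * c k)" for k
    have "mop \<mu> r (\<lambda>i. path (Suc l) i - unitv j i) = p l + smult \<beta> (mop \<mu> r q)"
      using mop_step_difference[OF q Suc.prems(1) idx_mem[of l]] by (simp add: up_idx up_j \<beta>_def)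
    also have "\<dots> = (\<Sum>k<l. smult (c' k) (p k)) + p l"
      unfolding c smult_sum_right smult_smult c'_def by (auto intro!: sum.cong)
    also have "\<dots> = (\<Sum>k<Suc l. smult (c' k) (p k))"
      by (simp add: c'_def)
    finally have expansion:
      "mop \<mu> r (\<lambda>i. path (Suc l) i - unitv j i) = (\<Sum>k<Suc l. smult (c' k) (p k))" .
    have "\<bar>c' k\<bar> \<le> (2 * B) ^ (Suc l - 1 - k)" if "k < Suc l" for k
    proof (cases "k = l")
      case False
      with that have "Suc l - 1 - k = Suc (l - 1 - k)" by simp
      moreover have "\<bar>\<beta> * c k\<bar> \<le> 2 * B * (2 * B) ^ (l - 1 - k)"
        unfolding abs_mult using \<beta>_bound c_bound[of k] False that
        by (intro mult_mono) auto
      ultimately show ?thesis using False by (simp add: c'_def)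
    qed (simp add: c'_def)
    with expansion show ?thesis by blast
  qed
qed

lemma x_times_p_expansion:
  fixes A B :: real
  assumes A: "\<And>i. i \<in> {1..r} \<Longrightarrow> \<bar>a (path l) i\<bar> \<le> A"
    and B: "\<And>i n. i \<in> {1..r} \<Longrightarrow> n \<in> mindex r \<Longrightarrow> \<bar>b n i\<bar> \<le> B"
  obtains d where "[:0, 1:] * p l = p (Suc l) + smult (b (path l) (idx l)) (p l)
                      + (\<Sum>k<l. smult (d k) (p k))"
    and "\<And>k. k < l \<Longrightarrow> \<bar>d k\<bar> \<le> r * A * (2 * B) ^ (l - 1 - k)"
proof -
  have "\<forall>j\<in>{1..r}. \<exists>c. smult (a (path l) j) (mop \<mu> r (\<lambda>i. path l i - unitv j i))
          = (\<Sum>k<l. smult (c k) (p k)) \<and> (\<forall>k<l. \<bar>c k\<bar> \<le> A * (2 * B) ^ (l - 1 - k))"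
  proof
    fix j assume j: "j \<in> {1..r}"
    have "0 \<le> A" using A[OF j] by linarith
    have "0 \<le> B" using B[OF j path_mindex[of l]] by linarith
    show "\<exists>c. smult (a (path l) j) (mop \<mu> r (\<lambda>i. path l i - unitv j i))
          = (\<Sum>k<l. smult (c k) (p k)) \<and> (\<forall>k<l. \<bar>c k\<bar> \<le> A * (2 * B) ^ (l - 1 - k))"
    proof (cases "path l j = 0")
      case True
      then show ?thesis
        using a_zero[OF path_mindex j] \<open>0 \<le> A\<close> \<open>0 \<le> B\<close> by (intro exI[of _ "\<lambda>_. 0"]) auto
    next
      case False
      then have "1 \<le> path l j" by simp
      then obtain c where c: "mop \<mu> r (\<lambda>i. path l i - unitv j i) = (\<Sum>k<l. smult (c k) (p k))"
        and c_bound: "\<forall>k<l. \<bar>c k\<bar> \<le> (2 * B) ^ (l - 1 - k)"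
        using mop_path_minus_unitv_expansion[OF B j] by blast
      have "\<bar>a (path l) j * c k\<bar> \<le> A * (2 * B) ^ (l - 1 - k)" if "k < l" for k
        unfolding abs_mult using A[OF j] c_bound that \<open>0 \<le> A\<close> by (intro mult_mono) auto
      then show ?thesis
        by (intro exI[of _ "\<lambda>k. a (path l) j * c k"]) (simp add: c smult_sum_right)
    qed
  qed
  then obtain c where c_prop: "\<forall>j\<in>{1..r}. smult (a (path l) j) (mop \<mu> r (\<lambda>i. path l i - unitv j i))
          = (\<Sum>k<l. smult (c j k) (p k)) \<and> (\<forall>k<l. \<bar>c j k\<bar> \<le> A * (2 * B) ^ (l - 1 - k))"
    by (rule bchoice[THEN exE])
  have "(\<Sum>j=1..r. smult (a (path l) j) (mop \<mu> r (\<lambda>i. path l i - unitv j i)))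
      = (\<Sum>j=1..r. \<Sum>k<l. smult (c j k) (p k))"
    using c_prop by (intro sum.cong) auto
  also have "\<dots> = (\<Sum>k<l. smult (\<Sum>j=1..r. c j k) (p k))"
    unfolding smult_sum by (rule sum.swap)
  finally have "[:0, 1:] * p l = p (Suc l) + smult (b (path l) (idx l)) (p l)
                + (\<Sum>k<l. smult (\<Sum>j=1..r. c j k) (p k))"
    using nnrr[OF path_mindex idx_mem[of l]] by (simp only: path_Suc)
  moreover have "\<bar>\<Sum>j=1..r. c j k\<bar> \<le> r * A * (2 * B) ^ (l - 1 - k)" if "k < l" for k
  proof -
    have "\<bar>\<Sum>j=1..r. c j k\<bar> \<le> (\<Sum>j=1..r. \<bar>c j k\<bar>)" by (rule sum_abs)
    also have "\<dots> \<le> (\<Sum>j=1..r. A * (2 * B) ^ (l - 1 - k))"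
      using c_prop that by (intro sum_mono) auto
    finally show ?thesis by simp
  qed
  ultimately show ?thesis by (rule that)
qed

lemma J_entries:
  fixes A B :: real and J :: "nat \<Rightarrow> nat \<Rightarrow> real"
  assumes J_def: "\<And>l. [:0, 1:] * p l = (\<Sum>k\<le>Suc l. smult (J l k) (p k))"
    and A: "\<And>i. i \<in> {1..r} \<Longrightarrow> \<bar>a (path l) i\<bar> \<le> A"
    and B: "\<And>i n. i \<in> {1..r} \<Longrightarrow> n \<in> mindex r \<Longrightarrow> \<bar>b n i\<bar> \<le> B"
  shows "J l (Suc l) = 1" and "J l l = b (path l) (idx l)"
    and "k < l \<Longrightarrow> \<bar>J l k\<bar> \<le> r * A * (2 * B) ^ (l - 1 - k)"
proof -
  obtain d where d: "[:0, 1:] * p l = p (Suc l) + smult (b (path l) (idx l)) (p l)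
                      + (\<Sum>k<l. smult (d k) (p k))"
    and d_bound: "\<And>k. k < l \<Longrightarrow> \<bar>d k\<bar> \<le> r * A * (2 * B) ^ (l - 1 - k)"
    using x_times_p_expansion[OF A B] by blast
  define e where "e k = (if k = Suc l then 1 else if k = l then b (path l) (idx l) else d k)" for k
  have "(\<Sum>k\<le>Suc l. smult (e k) (p k)) = [:0, 1:] * p l"
    unfolding d lessThan_Suc_atMost[symmetric] sum.lessThan_Suc by (simp add: e_def algebra_simps)
  then have same: "(\<Sum>k\<le>Suc l. smult (J l k) (p k)) = (\<Sum>k\<le>Suc l. smult (e k) (p k))"
    unfolding J_def[symmetric] by (rule sym)
  have J_e: "J l k = e k" if "k \<le> Suc l" for k
    by (rule graded_basis_coeffs_unique[OF degree_p p_nonzero same that])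
  show "J l (Suc l) = 1" and "J l l = b (path l) (idx l)"
    using J_e[of "Suc l"] J_e[of l] by (simp_all add: e_def)
  show "\<bar>J l k\<bar> \<le> r * A * (2 * B) ^ (l - 1 - k)" if "k < l"
    using J_e[of k] d_bound[OF that] that by (simp add: e_def)
qed

end

theorem proposition4:
  fixes r :: nat
    and \<mu> :: "nat \<Rightarrow> real measure"
    and a b :: "(nat \<Rightarrow> nat) \<Rightarrow> nat \<Rightarrow> real"
    and path :: "nat \<Rightarrow> (nat \<Rightarrow> nat)"
    and idx :: "nat \<Rightarrow> nat"
    and J :: "nat \<Rightarrow> nat \<Rightarrow> real"
  assumes r_pos: "r \<ge> 1"
    and borel: "\<And>j. j \<in> {1..r} \<Longrightarrow> sets (\<mu> j) = sets borel"
    and moments: "\<And>j k. j \<in> {1..r} \<Longrightarrow> integrable (\<mu> j) (\<lambda>x. x ^ k)"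
    and perfect: "perfect_system \<mu> r"
    and a_zero: "\<And>n j. n \<in> mindex r \<Longrightarrow> j \<in> {1..r} \<Longrightarrow> n j = 0 \<Longrightarrow> a n j = 0"
    and nnrr: "\<And>n k. n \<in> mindex r \<Longrightarrow> k \<in> {1..r} \<Longrightarrow>
        [:0, 1:] * mop \<mu> r n
          = mop \<mu> r (\<lambda>i. n i + unitv k i) + smult (b n k) (mop \<mu> r n)
            + (\<Sum>j=1..r. smult (a n j) (mop \<mu> r (\<lambda>i. n i - unitv j i)))"
    and path0: "path 0 = (\<lambda>_. 0)"
    and path_step: "\<And>l. idx l \<in> {1..r} \<and> path (Suc l) = (\<lambda>i. path l i + unitv (idx l) i)"
    and J_def: "\<And>l. [:0, 1:] * mop \<mu> r (path l)
                   = (\<Sum>k\<le>Suc l. smult (J l k) (mop \<mu> r (path k)))"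
    and J_zero: "\<And>l k. k > Suc l \<Longrightarrow> J l k = 0"
    and a_bdd: "\<exists>A. \<forall>i\<in>{1..r}. \<forall>l. \<bar>a (path l) i\<bar> \<le> A"
    and b_bdd: "\<exists>B. \<forall>i\<in>{1..r}. \<forall>n\<in>mindex r. \<bar>b n i\<bar> \<le> B"
  shows "\<forall>R::real. R \<ge> 0 \<longrightarrow>
           (\<exists>C. \<forall>i j. \<bar>real i - real j\<bar> \<le> R \<longrightarrow> \<bar>J i j\<bar> \<le> C)"
proof -
  \<comment> \<open>Only the degrees of the P_n enter.\<close>
  interpret nearest_neighbour_path r \<mu> a b path idx
    using perfect a_zero nnrr path0 path_step by unfold_locales
  obtain A where A: "\<And>i l. i \<in> {1..r} \<Longrightarrow> \<bar>a (path l) i\<bar> \<le> A" using a_bdd by blast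
  obtain B where B: "\<And>i n. i \<in> {1..r} \<Longrightarrow> n \<in> mindex r \<Longrightarrow> \<bar>b n i\<bar> \<le> B" using b_bdd by blast
  have "1 \<in> {1..r}" using r_pos by simp
  then have "0 \<le> A" and "0 \<le> B" using A[of 1 0] B[of 1 "path 0"] path_mindex[of 0] by force+
  note J = J_entries[OF J_def A B]
  have super: "\<bar>J l (Suc l)\<bar> \<le> max 1 B" and diag: "\<bar>J l l\<bar> \<le> max 1 B" for l
    using J(1,2)[of l] B[OF idx_mem[of l] path_mindex[of l]] by auto
  have "0 \<le> real r * A" and "0 \<le> 2 * B" using \<open>0 \<le> A\<close> \<open>0 \<le> B\<close> by simp_all
  from lower_hessenberg_band_bounded[OF J_zero super diag J(3) this]
  show ?thesis by blast
qed

end
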